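(* Let $S=\{f_1,\dots,f_n\}$ be a set of polynomials in $\mathbb{Q}[\alpha_1,\dots,\alpha_r]$ and let $\sigma$ be a permutation of $\{\alpha_1,\dots,\alpha_r\}$. If $S$ is reducible with respect to $\sigma$, then every subset $L\subseteq S$ is reducible with respect to $\sigma$.
   Context: "Irreducible factors" are taken over $\mathbb{Q}$ and polynomials differing by a nonzero constant are identified. A compatibility graph for a finite set $S$ of polynomials is a graph with vertex set $S$. Reduction step: given $(S,C)$ with $S=\{f_1,\dots,f_n\}$ and a variable $\alpha$, the step is undefined if some $f_i$ has degree $>1$ in $\alpha$; otherwise write $f_i=g_i\alpha+h_i$ with $g_i=\partial f_i/\partial\alpha$, $h_i=f_i|_{\alpha=0}$, let $S^4=\{g_i\}\cup\{h_i\}\cup\{g_ih_j-h_ig_j: i\neq j,\ f_if_j\in E(C)\}$ and let $S_{(\alpha)}$ be the set of irreducible factors of members of $S^4$. Its compatibility graph $C_{(\alpha)}$: attach to each $m\in S_{(\alpha)}$ the labels $\{0,i\}$ whenever $m\mid g_i$; $\{i,\infty\}$ whenever $m\mid h_i$, and also $\{0,i\}$ if $h_i=f_i$; $\{i,j\}$ whenever $m\mid g_ih_j-h_ig_j$ with $f_i,f_j$ compatible; $m,m'$ are adjacent iff some label of $m$ meets some label of $m'$. Let $S_{[\sigma(1)]}=S_{(\sigma(1))}$ computed from $(S,\text{complete graph})$, and for $k\ge 2$ let $S_{[\sigma(1),\dots,\sigma(k)]}=\bigcap_{i} S_{[\sigma(1),\dots,\widehat{\sigma(i)},\dots,\sigma(k)](\sigma(i))}$,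 the intersection over those $i\le k$ for which the step is defined (undefined if there are none), with compatibility graph whose edge set is the intersection of the corresponding edge sets. $S$ is reducible with respect to $\sigma$ if for all $1\le i\le r-1$ the set $S_{[\sigma(1),\dots,\sigma(i)]}$ is defined and all its members have degree $\le 1$ in $\sigma(i+1)$. *)

theory Defs
  imports Complex_Main "HOL-Library.Poly_Mapping" "HOL-Computational_Algebra.Factorial_Ring"
begin

text \<open>Multivariate polynomials over the rationals: variables are natural numbers
  (alpha_i is variable i), a monomial is a finitely supported exponent vector.\<close>
type_synonym mpoly = "(nat \<Rightarrow>\<^sub>0 nat) \<Rightarrow>\<^sub>0 rat"

definition mpoly_vars :: "mpoly \<Rightarrow> nat set" where
  "mpoly_vars p = (\<Union>m\<in>Poly_Mapping.keys p. Poly_Mapping.keys m)"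

definition deg_in :: "nat \<Rightarrow> mpoly \<Rightarrow> nat" where
  "deg_in a p = Max (insert 0 ((\<lambda>m. Poly_Mapping.lookup m a) ` Poly_Mapping.keys p))"

definition pderiv_var :: "nat \<Rightarrow> mpoly \<Rightarrow> mpoly" where
  "pderiv_var a p = (\<Sum>m\<in>Poly_Mapping.keys p.
      Poly_Mapping.single (m - Poly_Mapping.single a 1) (of_nat (Poly_Mapping.lookup m a) * Poly_Mapping.lookup p m))"

definition subst_zero :: "nat \<Rightarrow> mpoly \<Rightarrow> mpoly" where
  "subst_zero a p = (\<Sum>m\<in>{m\<in>Poly_Mapping.keys p. Poly_Mapping.lookup m a = 0}. Poly_Mapping.single m (Poly_Mapping.lookup p m))"

text \<open>Canonical representative of a polynomial modulo nonzero constants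
  (leading coefficient, w.r.t. the linear order on monomials, equal to 1).\<close>
definition normalize_mp :: "mpoly \<Rightarrow> mpoly" where
  "normalize_mp p = p * Poly_Mapping.single 0 (1 / Poly_Mapping.lookup p (Max (Poly_Mapping.keys p)))"

text \<open>Graphs on a set of polynomials are given by their (symmetric) edge relation.\<close>
type_synonym graph = "(mpoly \<times> mpoly) set"

definition complete_graph :: "mpoly set \<Rightarrow> graph" where
  "complete_graph S = {(f, f'). f \<in> S \<and> f' \<in> S \<and> f \<noteq> f'}"

text \<open>Irreducible factors (up to constants) of a polynomial q; a factor of q means
  an irreducible divisor of a nonzero q.\<close>
definition is_factor :: "mpoly \<Rightarrow> mpoly \<Rightarrow> bool" where
  "is_factor m q \<longleftrightarrow> q \<noteq> 0 \<and> m dvd q"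

datatype label_elem = LZero | LInf | LIdx mpoly

definition step_defined :: "mpoly set \<Rightarrow> nat \<Rightarrow> bool" where
  "step_defined S a \<longleftrightarrow> (\<forall>f\<in>S. deg_in a f \<le> 1)"

definition S4 :: "mpoly set \<Rightarrow> graph \<Rightarrow> nat \<Rightarrow> mpoly set" where
  "S4 S C a = pderiv_var a ` S \<union> subst_zero a ` S \<union>
     {pderiv_var a f * subst_zero a f' - subst_zero a f * pderiv_var a f' | f f'.
        f \<in> S \<and> f' \<in> S \<and> f \<noteq> f' \<and> (f, f') \<in> C}"

definition step_set :: "mpoly set \<Rightarrow> graph \<Rightarrow> nat \<Rightarrow> mpoly set" where
  "step_set S C a = {normalize_mp m | m. irreducible m \<and> (\<exists>q\<in>S4 S C a. is_factor m q)}"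

definition labels :: "mpoly set \<Rightarrow> graph \<Rightarrow> nat \<Rightarrow> mpoly \<Rightarrow> label_elem set set" where
  "labels S C a m =
     {{LZero, LIdx f} | f. f \<in> S \<and> is_factor m (pderiv_var a f)} \<union>
     {{LIdx f, LInf} | f. f \<in> S \<and> is_factor m (subst_zero a f)} \<union>
     {{LZero, LIdx f} | f. f \<in> S \<and> is_factor m (subst_zero a f) \<and> subst_zero a f = f} \<union>
     {{LIdx f, LIdx f'} | f f'. f \<in> S \<and> f' \<in> S \<and> f \<noteq> f' \<and> (f, f') \<in> C \<and>
        is_factor m (pderiv_var a f * subst_zero a f' - subst_zero a f * pderiv_var a f')}"

definition step_graph :: "mpoly set \<Rightarrow> graph \<Rightarrow> nat \<Rightarrow> graph" where
  "step_graph S C a = {(m, m'). m \<in> step_set S C a \<and> m' \<in> step_set S C a \<and> m \<noteq> m' \<and>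
      (\<exists>l\<in>labels S C a m. \<exists>l'\<in>labels S C a m'. l \<inter> l' \<noteq> {})}"

definition red_step :: "mpoly set \<times> graph \<Rightarrow> nat \<Rightarrow> (mpoly set \<times> graph) option" where
  "red_step SC a = (if step_defined (fst SC) a
      then Some (step_set (fst SC) (snd SC) a, step_graph (fst SC) (snd SC) a) else None)"

definition del_nth :: "nat \<Rightarrow> 'a list \<Rightarrow> 'a list" where
  "del_nth i xs = take i xs @ drop (Suc i) xs"

text \<open>iter_red S0 k xs, for length xs = k, is S_[xs] (with its graph), starting from
  (S0, complete graph).  For k = 1 the general rule gives S_(x1) from (S0, complete).\<close>
primrec iter_red :: "mpoly set \<Rightarrow> nat \<Rightarrow> nat list \<Rightarrow> (mpoly set \<times> graph) option" where
  "iter_red S0 0 xs = Some (S0, complete_graph S0)"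
| "iter_red S0 (Suc k) xs =
     (let R = {T | T i. i < length xs \<and>
                 Option.bind (iter_red S0 k (del_nth i xs)) (\<lambda>U. red_step U (xs ! i)) = Some T}
      in if R = {} then None else Some (\<Inter>(fst ` R), \<Inter>(snd ` R)))"

definition S_br :: "mpoly set \<Rightarrow> nat list \<Rightarrow> (mpoly set \<times> graph) option" where
  "S_br S xs = iter_red (normalize_mp ` S) (length xs) xs"

definition reducible_wrt :: "nat \<Rightarrow> (nat \<Rightarrow> nat) \<Rightarrow> mpoly set \<Rightarrow> bool" where
  "reducible_wrt r \<sigma> S \<longleftrightarrow>
     (\<forall>i. 1 \<le> i \<and> i \<le> r - 1 \<longrightarrow>
        (\<exists>T. S_br S (map \<sigma> [1..<i+1]) = Some T \<and> (\<forall>f\<in>fst T. deg_in (\<sigma> (i+1)) f \<le> 1)))"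

end

theory Submission
  imports Defs "HOL-Library.Product_Order"
begin

text \<open>Every ingredient of the reduction (the set S4, its irreducible factors, the labels and
  the compatibility graph, the iterated intersections) grows with the polynomial set and the
  graph, while being defined is inherited by smaller sets.  So for L \<subseteq> S each S_[\<dots>] computed
  from L exists whenever the one from S does and is contained in it; the degree condition on
  its members is then inherited.  Pairs (set, graph) are compared componentwise.\<close>

lemma S4_mono: "S' \<subseteq> S \<Longrightarrow> C' \<subseteq> C \<Longrightarrow> S4 S' C' a \<subseteq> S4 S C a"
  unfolding S4_def by blast

lemma step_set_mono: "S' \<subseteq> S \<Longrightarrow> C' \<subseteq> C \<Longrightarrow> step_set S' C' a \<subseteq> step_set S C a"
  unfolding step_set_def using S4_mono by blast

lemma labels_mono: "S' \<subseteq> S \<Longrightarrow> C' \<subseteq> C \<Longrightarrow> labels S' C' a m \<subseteq> labels S C a m"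
  unfolding labels_def by blast

lemma step_graph_mono:
  assumes "S' \<subseteq> S" "C' \<subseteq> C"
  shows "step_graph S' C' a \<subseteq> step_graph S C a"
  using step_set_mono[OF assms, of a] labels_mono[OF assms, of a]
  unfolding step_graph_def by blast

lemma step_defined_antimono: "S' \<subseteq> S \<Longrightarrow> step_defined S a \<Longrightarrow> step_defined S' a"
  unfolding step_defined_def by blast

lemma complete_graph_mono: "S' \<subseteq> S \<Longrightarrow> complete_graph S' \<subseteq> complete_graph S"
  unfolding complete_graph_def by blast

lemma red_step_mono:
  assumes "red_step U a = Some T" and "U' \<le> U"
  obtains T' where "red_step U' a = Some T'" and "T' \<le> T"
proof -
  have U': "fst U' \<subseteq> fst U" "snd U' \<subseteq> snd U"
    using assms(2) by (simp_all add: less_eq_prod_def)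
  have "step_defined (fst U) a"
    and T: "T = (step_set (fst U) (snd U) a, step_graph (fst U) (snd U) a)"
    using assms(1) unfolding red_step_def by (auto split: if_splits)
  then have "step_defined (fst U') a"
    using step_defined_antimono[OF U'(1)] by blast
  then show thesis
    using that T step_set_mono[OF U'] step_graph_mono[OF U']
    unfolding red_step_def by (simp add: less_eq_prod_def)
qed

lemma Inter_pairs_antimono:
  assumes "\<And>X. X \<in> R \<Longrightarrow> \<exists>Y\<in>R'. Y \<le> X"
  shows "(\<Inter>(fst ` R'), \<Inter>(snd ` R')) \<le> ((\<Inter>(fst ` R), \<Inter>(snd ` R)) :: 'a set \<times> 'b set)"
  using assms by (fastforce simp: less_eq_prod_def)

lemma iter_red_mono:
  assumes "S0' \<subseteq> S0" and "iter_red S0 k xs = Some T"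
  obtains T' where "iter_red S0' k xs = Some T'" and "T' \<le> T"
  using assms(2)
proof (induction k arbitrary: xs T thesis)
  case 0
  then show ?case
    using assms(1) complete_graph_mono by (auto simp: less_eq_prod_def)
next
  case (Suc k)
  let ?R = "\<lambda>S0. {T | T i. i < length xs \<and>
              Option.bind (iter_red S0 k (del_nth i xs)) (\<lambda>U. red_step U (xs ! i)) = Some T}"
  have smaller: "\<exists>Y\<in>?R S0'. Y \<le> X" if "X \<in> ?R S0" for X
  proof -
    from that obtain i U where i: "i < length xs"
      and U: "iter_red S0 k (del_nth i xs) = Some U" "red_step U (xs ! i) = Some X"
      by (auto split: Option.bind_splits)
    obtain U' where U': "iter_red S0' k (del_nth i xs) = Some U'" "U' \<le> U"
      using Suc.IH[OF _ U(1)] by blast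
    obtain Y where Y: "red_step U' (xs ! i) = Some Y" "Y \<le> X"
      using red_step_mono[OF U(2) U'(2)] by blast
    have "Y \<in> ?R S0'"
      using i U'(1) Y(1) by auto
    then show ?thesis
      using Y(2) by blast
  qed
  have unfold: "iter_red S (Suc k) xs =
      (if ?R S = {} then None else Some (\<Inter>(fst ` ?R S), \<Inter>(snd ` ?R S)))" for S
    by (simp only: iter_red.simps Let_def)
  have "?R S0 \<noteq> {}" and T: "T = (\<Inter>(fst ` ?R S0), \<Inter>(snd ` ?R S0))"
    using Suc.prems(2) unfolding unfold by (auto split: if_splits)
  then have "?R S0' \<noteq> {}"
    using smaller by blast
  then have "iter_red S0' (Suc k) xs = Some (\<Inter>(fst ` ?R S0'), \<Inter>(snd ` ?R S0'))"
    unfolding unfold by simp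
  moreover have "(\<Inter>(fst ` ?R S0'), \<Inter>(snd ` ?R S0')) \<le> T"
    unfolding T by (rule Inter_pairs_antimono) (rule smaller)
  ultimately show ?case
    by (rule Suc.prems(1))
qed

lemma S_br_mono:
  assumes "L \<subseteq> S" and "S_br S xs = Some T"
  obtains T' where "S_br L xs = Some T'" and "fst T' \<subseteq> fst T"
proof -
  have "normalize_mp ` L \<subseteq> normalize_mp ` S"
    using assms(1) by blast
  then show thesis
    using that iter_red_mono assms(2) unfolding S_br_def
    by (metis less_eq_prod_def)
qed

theorem mainTheorem4:
  fixes r :: nat and \<sigma> :: "nat \<Rightarrow> nat" and S L :: "mpoly set"
  assumes "finite S"
    and "\<forall>f\<in>S. mpoly_vars f \<subseteq> {1..r}"
    and "bij_betw \<sigma> {1..r} {1..r}"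
    and "reducible_wrt r \<sigma> S"
    and "L \<subseteq> S"
  shows "reducible_wrt r \<sigma> L"
  unfolding reducible_wrt_def
proof (intro allI impI)
  fix i assume "1 \<le> i \<and> i \<le> r - 1"
  then obtain T where T: "S_br S (map \<sigma> [1..<i+1]) = Some T"
    and deg: "\<forall>f\<in>fst T. deg_in (\<sigma> (i+1)) f \<le> 1"
    using assms(4) unfolding reducible_wrt_def by blast
  obtain T' where "S_br L (map \<sigma> [1..<i+1]) = Some T'" "fst T' \<subseteq> fst T"
    using S_br_mono[OF assms(5) T] .
  then show "\<exists>T. S_br L (map \<sigma> [1..<i+1]) = Some T \<and> (\<forall>f\<in>fst T. deg_in (\<sigma> (i+1)) f \<le> 1)"
    using deg by blast
qed

end
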